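(* Let $\sigma:\mathbb{R}\to\mathbb{R}$ be a differentiable activation function for which there is a constant $c_\sigma>0$ such that for any $L'$-Lipschitz $h:\mathbb{R}\to\mathbb{R}$ that is constant outside $[-R,R]$ and any $\delta>0$, there exist reals $a,(\alpha_i,\beta_i,\gamma_i)_{i=1}^m$ with $m\le c_\sigma RL'/\delta$ and $\sup_{x\in\mathbb{R}}|a+\sum_{i=1}^m\alpha_i\sigma(\beta_ix+\gamma_i)-h(x)|\le\delta$. Then: 1. For any $M>0$ and $\delta>0$ there exists a 2-layer neural net $g:\mathbb{R}^2\to\mathbb{R}$ of size $m\le 8c_\sigma M^2/\delta+1$ such that $\sup_{x,y\in[-M,M]}|g(x,y)-xy|\le\delta$. 2. For any $0<a\le b<\infty$ and $\delta>0$ there exists a 2-layer neural net $q:\mathbb{R}\to\mathbb{R}$ of size $m\le c_\sigma\frac{b}{a^2\delta}+1$ such that $\sup_{x\in[a,b]}|q(x)-1/x|\le\delta$.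
   Context: A 2-layer neural net with activation $\sigma$ of size $m+1$ is a function of the form $x\mapsto a+\sum_{i=1}^m\alpha_i\sigma(w_i^\top x+\gamma_i)$ (the constant $a$ counting as one node). *)

theory Defs
  imports "HOL-Analysis.Analysis"
begin

text \<open>A 2-layer neural net with activation sigma of size s (s = m+1, the constant
  counting as one node): x maps to a + sum_{i<m} alpha_i * sigma(w_i . x + gamma_i).\<close>
definition two_layer_net :: "(real \<Rightarrow> real) \<Rightarrow> nat \<Rightarrow> ('a::euclidean_space \<Rightarrow> real) \<Rightarrow> bool" where
  "two_layer_net \<sigma> s g \<longleftrightarrow> s \<ge> 1 \<and>
     (\<exists>a (\<alpha>::nat \<Rightarrow> real) (w::nat \<Rightarrow> 'a) (\<gamma>::nat \<Rightarrow> real).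
        \<forall>x. g x = a + (\<Sum>i<s - 1. \<alpha> i * \<sigma> (w i \<bullet> x + \<gamma> i)))"

definition const_outside :: "real \<Rightarrow> (real \<Rightarrow> real) \<Rightarrow> bool" where
  "const_outside R h \<longleftrightarrow> (\<exists>c1 c2. \<forall>x. (x \<le> -R \<longrightarrow> h x = c1) \<and> (x \<ge> R \<longrightarrow> h x = c2))"

end

theory Submission
  imports Defs
begin

text \<open>Both functions are, on the relevant range, Lipschitz functions of one real variable that can
  be clipped to be constant outside a bounded interval, so the hypothesis on \<open>\<sigma>\<close> approximates them
  by one-hidden-layer nets. For the reciprocal the clipped function is \<open>1/t\<close> on \<open>[a, b]\<close>, of
  Lipschitz constant \<open>1/a\<^sup>2\<close>. For the product, polarization \<open>x y = ((x + y)\<^sup>2 - (x - y)\<^sup>2) / 4\<close>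
  reduces to the square on \<open>[-2M, 2M]\<close>, of Lipschitz constant \<open>M\<close> after division by 4; the two
  copies of its approximation with error \<open>\<delta>/2\<close>, evaluated at \<open>x + y\<close> and \<open>x - y\<close>, share one
  constant node.\<close>

definition lipschitz_approximable :: "(real \<Rightarrow> real) \<Rightarrow> real \<Rightarrow> bool" where
  "lipschitz_approximable \<sigma> c \<longleftrightarrow>
     (\<forall>R L h \<delta>. R > 0 \<longrightarrow> L > 0 \<longrightarrow> L-lipschitz_on UNIV h \<longrightarrow> const_outside R h \<longrightarrow> \<delta> > 0 \<longrightarrow>
        (\<exists>m::nat. \<exists>a (\<alpha>::nat \<Rightarrow> real) (\<beta>::nat \<Rightarrow> real) (\<gamma>::nat \<Rightarrow> real).
           real m \<le> c * R * L / \<delta> \<and>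
           (\<forall>x. \<bar>a + (\<Sum>i<m. \<alpha> i * \<sigma> (\<beta> i * x + \<gamma> i)) - h x\<bar> \<le> \<delta>)))"

lemma sum_lessThan_add:
  fixes f :: "nat \<Rightarrow> 'a::comm_monoid_add"
  shows "(\<Sum>i<m + n. f i) = (\<Sum>i<m. f i) + (\<Sum>i<n. f (m + i))"
  by (induction n) (simp_all add: add.assoc)

lemma two_layer_net_univariate:
  "two_layer_net \<sigma> (m + 1) (\<lambda>x::real. a + (\<Sum>i<m. \<alpha> i * \<sigma> (\<beta> i * x + \<gamma> i)))"
  unfolding two_layer_net_def by auto

lemma two_layer_net_compose_inner:
  fixes f :: "real \<Rightarrow> real" and u :: "'a::euclidean_space"
  assumes "two_layer_net \<sigma> s f"
  shows "two_layer_net \<sigma> s (\<lambda>x. f (u \<bullet> x))"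
proof -
  obtain a \<alpha> w \<gamma> where f: "\<And>t. f t = a + (\<Sum>i<s - 1. \<alpha> i * \<sigma> (w i \<bullet> t + \<gamma> i))"
    using assms unfolding two_layer_net_def by blast
  have "\<forall>x. f (u \<bullet> x) = a + (\<Sum>i<s - 1. \<alpha> i * \<sigma> ((w i *\<^sub>R u) \<bullet> x + \<gamma> i))"
    unfolding f by simp
  then show ?thesis
    using assms unfolding two_layer_net_def
    by (intro conjI exI[of _ a] exI[of _ \<alpha>] exI[of _ "\<lambda>i. w i *\<^sub>R u"] exI[of _ \<gamma>]) auto
qed

lemma two_layer_net_diff:
  assumes "two_layer_net \<sigma> s f" and "two_layer_net \<sigma> t g"
  shows "two_layer_net \<sigma> (s + t - 1) (\<lambda>x. f x - g x)"
proof -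
  obtain a \<alpha> w \<gamma> where f: "\<And>x. f x = a + (\<Sum>i<s - 1. \<alpha> i * \<sigma> (w i \<bullet> x + \<gamma> i))"
    using assms(1) unfolding two_layer_net_def by blast
  obtain b \<beta> v \<delta> where g: "\<And>x. g x = b + (\<Sum>i<t - 1. \<beta> i * \<sigma> (v i \<bullet> x + \<delta> i))"
    using assms(2) unfolding two_layer_net_def by blast
  define k where "k = s - 1"
  define \<alpha>' where "\<alpha>' i = (if i < k then \<alpha> i else - \<beta> (i - k))" for i
  define w' where "w' i = (if i < k then w i else v (i - k))" for i
  define \<gamma>' where "\<gamma>' i = (if i < k then \<gamma> i else \<delta> (i - k))" for i
  have size: "s + t - 1 - 1 = k + (t - 1)"
    using assms unfolding two_layer_net_def k_def by auto
  have "f x - g x = (a - b) + (\<Sum>i<s + t - 1 - 1. \<alpha>' i * \<sigma> (w' i \<bullet> x + \<gamma>' i))" for x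
    unfolding f g size sum_lessThan_add \<alpha>'_def w'_def \<gamma>'_def k_def
    by (simp add: sum_negf)
  then show ?thesis
    using assms unfolding two_layer_net_def by auto
qed

lemma lipschitz_on_clip:
  fixes f :: "real \<Rightarrow> real"
  assumes "L-lipschitz_on {lo..hi} f" and "lo \<le> hi"
  shows "L-lipschitz_on UNIV (\<lambda>t. f (max lo (min t hi)))"
proof -
  have clip: "1-lipschitz_on UNIV (\<lambda>t::real. max lo (min t hi))"
    by (rule lipschitz_onI) (auto simp: dist_real_def)
  have "range (\<lambda>t. max lo (min t hi)) \<subseteq> {lo..hi}"
    using assms(2) by auto
  then have "(L * 1)-lipschitz_on UNIV (\<lambda>t. f (max lo (min t hi)))"
    by (rule lipschitz_on_compose2[OF clip lipschitz_on_subset[OF assms(1)]])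
  then show ?thesis by simp
qed

lemma const_outside_clip:
  assumes "-R \<le> lo" and "hi \<le> R"
  shows "const_outside R (\<lambda>t. f (max lo (min t hi)))"
  unfolding const_outside_def
proof (intro exI allI conjI impI)
  fix x :: real
  assume "x \<le> -R"
  then have "max lo (min x hi) = lo"
    using assms(1) by linarith
  then show "f (max lo (min x hi)) = f lo" by simp
next
  fix x :: real
  assume "R \<le> x"
  then have "min x hi = hi"
    using assms(2) by linarith
  then show "f (max lo (min x hi)) = f (max lo hi)" by simp
qed

lemma lipschitz_on_power2:
  assumes "R \<ge> 0"
  shows "(2 * R)-lipschitz_on {-R..R} (\<lambda>t::real. t\<^sup>2)"
proof (rule lipschitz_onI)
  fix u v :: real
  assume "u \<in> {-R..R}" and "v \<in> {-R..R}"
  then have "\<bar>u + v\<bar> \<le> 2 * R" by auto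
  then have "\<bar>u - v\<bar> * \<bar>u + v\<bar> \<le> 2 * R * \<bar>u - v\<bar>"
    by (simp add: mult_left_mono mult.commute)
  moreover have "u\<^sup>2 - v\<^sup>2 = (u - v) * (u + v)"
    by (simp add: power2_eq_square algebra_simps)
  ultimately show "dist (u\<^sup>2) (v\<^sup>2) \<le> 2 * R * dist u v"
    by (simp add: dist_real_def abs_mult)
qed (use assms in simp)

lemma lipschitz_on_reciprocal:
  assumes "a > 0"
  shows "(1 / a\<^sup>2)-lipschitz_on {a..b} (\<lambda>t::real. 1 / t)"
proof (rule lipschitz_onI)
  fix u v :: real
  assume "u \<in> {a..b}" and "v \<in> {a..b}"
  then have u: "u \<ge> a" and v: "v \<ge> a" by auto
  have "a\<^sup>2 \<le> u * v"
    using u v assms by (simp add: power2_eq_square mult_mono)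
  have "\<bar>1/u - 1/v\<bar> = \<bar>u - v\<bar> / (u * v)"
    using u v assms by (simp add: field_simps abs_div)
  also have "\<dots> \<le> \<bar>u - v\<bar> / a\<^sup>2"
    using \<open>a\<^sup>2 \<le> u * v\<close> assms by (intro frac_le) auto
  finally show "dist (1/u) (1/v) \<le> 1 / a\<^sup>2 * dist u v"
    by (simp add: dist_real_def)
qed simp

lemma lipschitz_approximableE:
  assumes "lipschitz_approximable \<sigma> c"
    and "R > 0" "L > 0" "L-lipschitz_on UNIV h" "const_outside R h" "\<delta> > 0"
  obtains m and f :: "real \<Rightarrow> real"
  where "two_layer_net \<sigma> (m + 1) f" "real m \<le> c * R * L / \<delta>" "\<And>x. \<bar>f x - h x\<bar> \<le> \<delta>"
proof -
  obtain m a \<alpha> \<beta> \<gamma> where "real m \<le> c * R * L / \<delta>"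
    and "\<forall>x. \<bar>a + (\<Sum>i<m. \<alpha> i * \<sigma> (\<beta> i * x + \<gamma> i)) - h x\<bar> \<le> \<delta>"
    using assms(1)[unfolded lipschitz_approximable_def, rule_format, OF assms(2-6)] by blast
  then show thesis
    using that[OF two_layer_net_univariate] by blast
qed

lemma product_net:
  assumes "lipschitz_approximable \<sigma> c" and "M > 0" and "\<delta> > 0"
  shows "\<exists>(g :: real \<times> real \<Rightarrow> real) s. two_layer_net \<sigma> s g \<and>
           real s \<le> 8 * c * M\<^sup>2 / \<delta> + 1 \<and>
           (\<forall>x y. x \<in> {-M..M} \<longrightarrow> y \<in> {-M..M} \<longrightarrow> \<bar>g (x, y) - x * y\<bar> \<le> \<delta>)"
proof -
  define h where "h t = (max (-2*M) (min t (2*M)))\<^sup>2 / 4" for t :: real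
  have "(1/4 * (2 * (2*M)))-lipschitz_on {-2*M..2*M} (\<lambda>t::real. 1/4 * t\<^sup>2)"
    using lipschitz_on_power2[of "2*M"] assms(2)
    by (intro lipschitz_on_cmult_real_nonneg) auto
  then have lipschitz: "M-lipschitz_on UNIV h"
    unfolding h_def using lipschitz_on_clip[of M "-2*M" "2*M" "\<lambda>t. 1/4 * t\<^sup>2"] assms(2) by simp
  have flat: "const_outside (2*M) h"
    unfolding h_def by (rule const_outside_clip) auto
  have width: "2*M > 0" and error: "\<delta>/2 > 0"
    using assms by auto
  obtain m f where net: "two_layer_net \<sigma> (m + 1) f"
    and m: "real m \<le> c * (2*M) * M / (\<delta>/2)" and f: "\<And>t. \<bar>f t - h t\<bar> \<le> \<delta>/2"
    using lipschitz_approximableE[OF assms(1) width assms(2) lipschitz flat error] by blast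
  define g where "g p = f ((1, 1) \<bullet> p) - f ((1, -1) \<bullet> p)" for p :: "real \<times> real"
  have "two_layer_net \<sigma> (2 * m + 1) g"
    using two_layer_net_diff[OF two_layer_net_compose_inner two_layer_net_compose_inner, OF net net]
    unfolding g_def by (simp add: mult_2)
  moreover have "real (2 * m + 1) \<le> 8 * c * M\<^sup>2 / \<delta> + 1"
  proof -
    have "2 * real m \<le> 2 * (c * (2*M) * M / (\<delta>/2))"
      using m by simp
    also have "\<dots> = 8 * c * M\<^sup>2 / \<delta>"
      by (simp add: power2_eq_square field_simps)
    finally show ?thesis by simp
  qed
  moreover have "\<bar>g (x, y) - x * y\<bar> \<le> \<delta>" if "x \<in> {-M..M}" "y \<in> {-M..M}" for x y
  proof -
    have "x * y = h (x + y) - h (x - y)"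
      using that by (simp add: h_def max_def min_def power2_eq_square field_simps)
    then have "g (x, y) - x * y = (f (x + y) - h (x + y)) - (f (x - y) - h (x - y))"
      by (simp add: g_def)
    then show ?thesis
      using f[of "x + y"] f[of "x - y"] unfolding abs_le_iff by linarith
  qed
  ultimately show ?thesis by blast
qed

lemma reciprocal_net:
  assumes "lipschitz_approximable \<sigma> c" and "0 < a" "a \<le> b" "\<delta> > 0"
  shows "\<exists>(q :: real \<Rightarrow> real) s. two_layer_net \<sigma> s q \<and>
           real s \<le> c * b / (a\<^sup>2 * \<delta>) + 1 \<and> (\<forall>x\<in>{a..b}. \<bar>q x - 1 / x\<bar> \<le> \<delta>)"
proof -
  define h where "h t = 1 / max a (min t b)" for t :: real
  have lipschitz: "(1/a\<^sup>2)-lipschitz_on UNIV h"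
    unfolding h_def using lipschitz_on_clip[OF lipschitz_on_reciprocal[OF assms(2)] assms(3)] .
  have flat: "const_outside b h"
    unfolding h_def by (rule const_outside_clip) (use assms in auto)
  have width: "b > 0" and slope: "1/a\<^sup>2 > 0"
    using assms by auto
  obtain m q where net: "two_layer_net \<sigma> (m + 1) q"
    and m: "real m \<le> c * b * (1/a\<^sup>2) / \<delta>" and q: "\<And>t. \<bar>q t - h t\<bar> \<le> \<delta>"
    using lipschitz_approximableE[OF assms(1) width slope lipschitz flat assms(4)] by blast
  have "\<bar>q x - 1 / x\<bar> \<le> \<delta>" if "x \<in> {a..b}" for x
    using q[of x] that by (simp add: h_def max_def min_def)
  moreover have "real (m + 1) \<le> c * b / (a\<^sup>2 * \<delta>) + 1"
    using m by simp
  ultimately show ?thesis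
    using net by blast
qed

theorem lemma8:
  fixes \<sigma> :: "real \<Rightarrow> real" and c\<sigma> :: real
  assumes diff: "\<forall>x. \<sigma> differentiable (at x)"
    and cpos: "c\<sigma> > 0"
    and approx: "\<forall>R L h \<delta>. R > 0 \<longrightarrow> L > 0 \<longrightarrow> L-lipschitz_on UNIV h \<longrightarrow> const_outside R h \<longrightarrow> \<delta> > 0 \<longrightarrow>
        (\<exists>m::nat. \<exists>a (\<alpha>::nat \<Rightarrow> real) (\<beta>::nat \<Rightarrow> real) (\<gamma>::nat \<Rightarrow> real).
           real m \<le> c\<sigma> * R * L / \<delta> \<and>
           (\<forall>x. \<bar>a + (\<Sum>i<m. \<alpha> i * \<sigma> (\<beta> i * x + \<gamma> i)) - h x\<bar> \<le> \<delta>))"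
  shows "(\<forall>M \<delta>. M > 0 \<longrightarrow> \<delta> > 0 \<longrightarrow>
            (\<exists>(g :: real \<times> real \<Rightarrow> real) s. two_layer_net \<sigma> s g \<and>
               real s \<le> 8 * c\<sigma> * M\<^sup>2 / \<delta> + 1 \<and>
               (\<forall>x y. x \<in> {-M..M} \<longrightarrow> y \<in> {-M..M} \<longrightarrow> \<bar>g (x, y) - x * y\<bar> \<le> \<delta>)))
       \<and> (\<forall>a b \<delta>. 0 < a \<longrightarrow> a \<le> b \<longrightarrow> \<delta> > 0 \<longrightarrow>
            (\<exists>(q :: real \<Rightarrow> real) s. two_layer_net \<sigma> s q \<and>
               real s \<le> c\<sigma> * b / (a\<^sup>2 * \<delta>) + 1 \<and>
               (\<forall>x\<in>{a..b}. \<bar>q x - 1 / x\<bar> \<le> \<delta>)))"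
proof -
  have approximable: "lipschitz_approximable \<sigma> c\<sigma>"
    using approx unfolding lipschitz_approximable_def .
  show ?thesis
    using product_net[OF approximable] reciprocal_net[OF approximable] by blast
qed

end
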